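(* For every $n\ge1$, the Möbius function of the priority lattice $\Pi(n)$ satisfies $\mu(\hat0,\hat1)=0$.
   Context: $[n]_0=\{0,\dots,n\}$. A priority forest on $[n]_0$ is a rooted forest with vertex set $[n]_0$ whose component trees $T_0,T_1,\dots$ are increasing (each non-root vertex has a larger label than its parent) and satisfy: for $j<k$ every label of $T_j$ is smaller than every label of $T_k$. The priority lattice $\Pi(n)$ is the set of priority forests on $[n]_0$ ordered by inclusion of edge sets, together with an extra element $\hat1$ declared greater than every priority forest; $\hat0$ is the edgeless forest. *)

theory Defs
  imports Main
begin

text \<open>A rooted forest on the vertex set [n]_0 = {0..n} is encoded by its set of
  directed edges (parent, child).\<close>

definition vertices :: "nat \<Rightarrow> nat set" where
  "vertices n = {0..n}"

definition comp :: "nat \<Rightarrow> (nat \<times> nat) set \<Rightarrow> nat \<Rightarrow> nat set" where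
  "comp n F x = {y \<in> vertices n. (x, y) \<in> (F \<union> F\<inverse>)\<^sup>*}"

definition priority_forest :: "nat \<Rightarrow> (nat \<times> nat) set \<Rightarrow> bool" where
  "priority_forest n F \<longleftrightarrow>
     F \<subseteq> vertices n \<times> vertices n \<and>
     (\<forall>(p, c) \<in> F. p < c) \<and>
     (\<forall>p p' c. (p, c) \<in> F \<and> (p', c) \<in> F \<longrightarrow> p = p') \<and>
     (\<forall>x \<in> vertices n. \<forall>y \<in> vertices n. comp n F x \<noteq> comp n F y \<longrightarrow>
        (\<forall>a \<in> comp n F x. \<forall>b \<in> comp n F y. a < b) \<or>
        (\<forall>a \<in> comp n F x. \<forall>b \<in> comp n F y. b < a))"

definition priority_lattice :: "nat \<Rightarrow> (nat \<times> nat) set option set" where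
  "priority_lattice n = Some ` {F. priority_forest n F} \<union> {None}"

definition priority_le :: "(nat \<times> nat) set option \<Rightarrow> (nat \<times> nat) set option \<Rightarrow> bool" where
  "priority_le x y \<longleftrightarrow> y = None \<or> (\<exists>A B. x = Some A \<and> y = Some B \<and> A \<subseteq> B)"

definition mobius :: "'a set \<Rightarrow> ('a \<Rightarrow> 'a \<Rightarrow> bool) \<Rightarrow> 'a \<Rightarrow> 'a \<Rightarrow> int" where
  "mobius P le = (THE m.
     (\<forall>x \<in> P. \<forall>y \<in> P. m x y =
        (if x = y then 1
         else if le x y then - (\<Sum>z \<in> {z \<in> P. le x z \<and> le z y \<and> z \<noteq> y}. m x z)
         else 0)) \<and>
     (\<forall>x y. x \<notin> P \<or> y \<notin> P \<longrightarrow> m x y = 0))"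

end

theory Submission
  imports Defs
begin

text \<open>
  Let I be the set of forests contained in the path 0 - 1 - ... - n. For a priority
  forest F, the forest F \<inter> path is the largest element of I below F, and it is nonempty
  whenever F is: the trees of F occupy intervals, so the least vertex a of a nontrivial
  tree has a+1 in the same tree, and the parent of a+1 can only be a. The top element
  has the whole path as largest element of I below it. So for every y outside I the
  half-open interval [0, y) is the closed interval [0, h], h the largest element of I
  below y, whose Moebius sum vanishes since h is not 0, together with elements outside
  I; hence mu(0, y) = 0 by induction on y.
\<close>

function mobius_ranked ::
    "('a \<Rightarrow> nat) \<Rightarrow> 'a set \<Rightarrow> ('a \<Rightarrow> 'a \<Rightarrow> bool) \<Rightarrow> 'a \<Rightarrow> 'a \<Rightarrow> int" where
  "mobius_ranked r P le x y =
     (if x \<in> P \<and> y \<in> P then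
        if x = y then 1
        else if le x y then
          - (\<Sum>z \<in> {z \<in> P. le x z \<and> le z y \<and> z \<noteq> y \<and> r z < r y}. mobius_ranked r P le x z)
        else 0
      else 0)"
  by auto
termination by (relation "measure (\<lambda>(r, P, le, x, y). r y)") auto

text \<open>The guard \<open>r z < r y\<close> only ensures termination; it is vacuous when \<open>r\<close> is strictly
  monotone on \<open>P\<close>, as \<open>finite_poset.rank\<close> below.\<close>

declare mobius_ranked.simps [simp del]

locale finite_poset =
  fixes P :: "'a set" and le :: "'a \<Rightarrow> 'a \<Rightarrow> bool"
  assumes finite_carrier: "finite P"
    and refl: "x \<in> P \<Longrightarrow> le x x"
    and antisym: "x \<in> P \<Longrightarrow> y \<in> P \<Longrightarrow> le x y \<Longrightarrow> le y x \<Longrightarrow> x = y"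
    and trans: "x \<in> P \<Longrightarrow> y \<in> P \<Longrightarrow> z \<in> P \<Longrightarrow> le x y \<Longrightarrow> le y z \<Longrightarrow> le x z"
begin

definition rank :: "'a \<Rightarrow> nat" where
  "rank y = card {z \<in> P. le z y \<and> z \<noteq> y}"

lemma rank_less:
  assumes "x \<in> P" "y \<in> P" "le x y" "x \<noteq> y"
  shows "rank x < rank y"
proof -
  have "{z \<in> P. le z x \<and> z \<noteq> x} \<subseteq> {z \<in> P. le z y \<and> z \<noteq> y}"
  proof (intro subsetI CollectI conjI)
    fix z assume z: "z \<in> {z \<in> P. le z x \<and> z \<noteq> x}"
    then show "z \<in> P" "le z y"
      using assms trans by blast+
    show "z \<noteq> y"
      using z assms antisym by blast
  qed
  moreover have "x \<in> {z \<in> P. le z y \<and> z \<noteq> y} - {z \<in> P. le z x \<and> z \<noteq> x}"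
    using assms by simp
  ultimately have "{z \<in> P. le z x \<and> z \<noteq> x} \<subset> {z \<in> P. le z y \<and> z \<noteq> y}"
    by blast
  then show ?thesis
    unfolding rank_def by (rule psubset_card_mono[rotated]) (simp add: finite_carrier)
qed

lemma mobius_eq_mobius_ranked: "mobius P le = mobius_ranked rank P le"
proof -
  let ?strict = "\<lambda>x y. {z \<in> P. le x z \<and> le z y \<and> z \<noteq> y}"
  let ?is_mobius = "\<lambda>m. (\<forall>x \<in> P. \<forall>y \<in> P. m x y =
        (if x = y then 1 else if le x y then - (\<Sum>z \<in> ?strict x y. m x z) else 0)) \<and>
      (\<forall>x y. x \<notin> P \<or> y \<notin> P \<longrightarrow> m x y = 0)"
  have guard: "{z \<in> P. le x z \<and> le z y \<and> z \<noteq> y \<and> rank z < rank y} = ?strict x y"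
    if "y \<in> P" for x y
    using that rank_less by auto
  have unique: "m x y = mobius_ranked rank P le x y" if "?is_mobius m" for m x y
  proof (induction "rank y" arbitrary: x y rule: less_induct)
    case less
    show ?case
    proof (cases "x \<in> P \<and> y \<in> P")
      case True
      have "(\<Sum>z \<in> ?strict x y. m x z) = (\<Sum>z \<in> ?strict x y. mobius_ranked rank P le x z)"
        using less.hyps rank_less True by (intro sum.cong) auto
      with \<open>?is_mobius m\<close> True show ?thesis
        by (simp add: mobius_ranked.simps[of rank P le x y] guard)
    next
      case False
      with \<open>?is_mobius m\<close> show ?thesis
        by (auto simp: mobius_ranked.simps[of rank P le x y])
    qed
  qed
  have ranked: "?is_mobius (mobius_ranked rank P le)"
  proof (intro conjI ballI allI impI)
    fix x y
    show "mobius_ranked rank P le x y = (if x = y then 1 else if le x y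
      then - (\<Sum>z \<in> ?strict x y. mobius_ranked rank P le x z) else 0)" if "x \<in> P" "y \<in> P"
      using that by (simp add: mobius_ranked.simps[of rank P le x y] guard)
    show "mobius_ranked rank P le x y = 0" if "x \<notin> P \<or> y \<notin> P"
      using that by (auto simp: mobius_ranked.simps[of rank P le x y])
  qed
  show ?thesis
    unfolding mobius_def
  proof (rule the_equality)
    show "m = mobius_ranked rank P le" if "?is_mobius m" for m
      using unique[OF that] by (intro ext)
  qed (fact ranked)
qed

lemma mobius_rec:
  assumes "x \<in> P" "y \<in> P"
  shows "mobius P le x y =
    (if x = y then 1
     else if le x y then - (\<Sum>z \<in> {z \<in> P. le x z \<and> le z y \<and> z \<noteq> y}. mobius P le x z)
     else 0)"
proof -
  have "{z \<in> P. le x z \<and> le z y \<and> z \<noteq> y \<and> rank z < rank y} = {z \<in> P. le x z \<and> le z y \<and> z \<noteq> y}"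
    using assms rank_less by auto
  then show ?thesis
    using assms by (simp add: mobius_eq_mobius_ranked mobius_ranked.simps[of rank P le x y])
qed

lemma mobius_interval_sum:
  assumes "x \<in> P" "y \<in> P" "le x y" "x \<noteq> y"
  shows "(\<Sum>z \<in> {z \<in> P. le x z \<and> le z y}. mobius P le x z) = 0"
proof -
  let ?strict = "{z \<in> P. le x z \<and> le z y \<and> z \<noteq> y}"
  have "{z \<in> P. le x z \<and> le z y} = insert y ?strict"
    using assms refl by auto
  moreover have "finite ?strict"
    using finite_carrier by simp
  ultimately show ?thesis
    using mobius_rec[OF assms(1,2)] assms(3,4) by simp
qed

lemma mobius_eq_0_outside:
  assumes x: "x \<in> P"
    and largest_below: "\<And>y. y \<in> P \<Longrightarrow> y \<notin> I \<Longrightarrow> le x y \<Longrightarrow>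
      \<exists>h \<in> I \<inter> P. le x h \<and> h \<noteq> x \<and> le h y \<and> (\<forall>z \<in> I \<inter> P. le z y \<longrightarrow> le z h)"
  shows "y \<in> P \<Longrightarrow> y \<notin> I \<Longrightarrow> mobius P le x y = 0"
proof (induction "rank y" arbitrary: y rule: less_induct)
  case less
  show ?case
  proof (cases "le x y")
    case False
    then show ?thesis
      using mobius_rec[OF x less.prems(1)] refl[OF x] by auto
  next
    case True
    then obtain h where h: "h \<in> I" "h \<in> P" "le x h" "h \<noteq> x" "le h y"
        and below_h: "\<forall>z \<in> I \<inter> P. le z y \<longrightarrow> le z h"
      using largest_below less.prems by blast
    have "x \<noteq> y"
      using h antisym x by blast
    let ?S = "{z \<in> P. le x z \<and> le z y \<and> z \<noteq> y}"
    let ?T = "{z \<in> P. le x z \<and> le z h}"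
    have "?T \<subseteq> ?S"
    proof
      fix z assume z: "z \<in> ?T"
      have "z \<noteq> y"
        using z h less.prems antisym by blast
      then show "z \<in> ?S"
        using z h less.prems by (blast intro: trans)
    qed
    moreover have "mobius P le x z = 0" if z: "z \<in> ?S - ?T" for z
    proof -
      have "z \<notin> I"
        using z below_h by blast
      moreover have "rank z < rank y"
        using z less.prems rank_less by blast
      ultimately show ?thesis
        using less.hyps z by blast
    qed
    ultimately have "(\<Sum>z \<in> ?S. mobius P le x z) = (\<Sum>z \<in> ?T. mobius P le x z)"
      using finite_carrier by (intro sum.mono_neutral_right) auto
    also have "\<dots> = 0"
      using mobius_interval_sum[OF x h(2,3)] h(4) by metis
    finally show ?thesis
      using mobius_rec[OF x less.prems(1)] \<open>x \<noteq> y\<close> True by simp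
  qed
qed

end

lemma connected_sym:
  "(x, y) \<in> (F \<union> F\<inverse>)\<^sup>* \<Longrightarrow> (y, x) \<in> (F \<union> F\<inverse>)\<^sup>*"
  using symD[OF sym_rtrancl[OF sym_Un_converse]] .

lemma mem_comp_iff: "y \<in> comp n F x \<longleftrightarrow> y \<in> vertices n \<and> (x, y) \<in> (F \<union> F\<inverse>)\<^sup>*"
  unfolding comp_def by simp

lemma self_mem_comp: "x \<in> vertices n \<Longrightarrow> x \<in> comp n F x"
  by (simp add: mem_comp_iff)

lemma comp_eq_if_connected:
  assumes "(x, y) \<in> (F \<union> F\<inverse>)\<^sup>*"
  shows "comp n F x = comp n F y"
  using rtrancl_trans[OF assms] rtrancl_trans[OF connected_sym[OF assms]] unfolding comp_def by blast

lemma rtrancl_increasing_le: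
  assumes "\<forall>(p, c) \<in> F. p < c" and "(x, y) \<in> F\<^sup>*"
  shows "x \<le> (y::nat)"
  using assms(2) by (induction rule: rtrancl_induct) (use assms(1) in fastforce)+

lemma reachable_from_root:
  assumes unique_parent: "\<forall>p p' c. (p, c) \<in> F \<and> (p', c) \<in> F \<longrightarrow> p = p'"
    and root: "\<nexists>q. (q, r) \<in> F"
    and "(r, v) \<in> (F \<union> F\<inverse>)\<^sup>*"
  shows "(r, v) \<in> F\<^sup>*"
  using assms(3)
proof (induction rule: rtrancl_induct)
  case base
  then show ?case by simp
next
  case (step y z)
  show ?case
  proof (cases "(y, z) \<in> F")
    case True
    with step.IH show ?thesis by (rule rtrancl_into_rtrancl)
  next
    case False
    then have zy: "(z, y) \<in> F"
      using step.hyps(2) by auto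
    from step.IH show ?thesis
    proof (cases rule: rtranclE)
      case base
      then show ?thesis using root zy by auto
    next
      case (step y')
      then show ?thesis using unique_parent zy by blast
    qed
  qed
qed

lemma priority_forest_comp_convex:
  assumes pf: "priority_forest n F" and p: "p \<in> vertices n"
    and a: "a \<in> comp n F p" and c: "c \<in> comp n F p" and "a \<le> v" "v \<le> c"
  shows "v \<in> comp n F p"
proof (rule ccontr)
  assume v_notin: "v \<notin> comp n F p"
  have v: "v \<in> vertices n"
    using c \<open>v \<le> c\<close> by (auto simp: mem_comp_iff vertices_def)
  then have v_in: "v \<in> comp n F v"
    by (rule self_mem_comp)
  have "\<forall>x \<in> vertices n. \<forall>y \<in> vertices n. comp n F x \<noteq> comp n F y \<longrightarrow>
      (\<forall>a \<in> comp n F x. \<forall>b \<in> comp n F y. a < b) \<or> (\<forall>a \<in> comp n F x. \<forall>b \<in> comp n F y. b < a)"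
    using pf unfolding priority_forest_def by blast
  moreover have "comp n F p \<noteq> comp n F v"
    using v_in v_notin by blast
  ultimately consider "\<forall>x \<in> comp n F p. \<forall>y \<in> comp n F v. x < y"
    | "\<forall>x \<in> comp n F p. \<forall>y \<in> comp n F v. y < x"
    using p v by blast
  then show False
  proof cases
    case 1
    then have "c < v" using c v_in by blast
    with \<open>v \<le> c\<close> show False by simp
  next
    case 2
    then have "v < a" using a v_in by blast
    with \<open>a \<le> v\<close> show False by simp
  qed
qed

lemma priority_forest_edge_from_least:
  assumes pf: "priority_forest n F"
    and a: "a \<in> comp n F p" and a_succ: "Suc a \<in> comp n F p"
    and least: "\<forall>x \<in> comp n F p. a \<le> x"
  shows "(a, Suc a) \<in> F"
proof -
  have edges: "F \<subseteq> vertices n \<times> vertices n" and increasing: "\<forall>(p, c) \<in> F. p < c"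
    and unique_parent: "\<forall>p p' c. (p, c) \<in> F \<and> (p', c) \<in> F \<longrightarrow> p = p'"
    using pf unfolding priority_forest_def by simp_all
  have "(p, a) \<in> (F \<union> F\<inverse>)\<^sup>*" and p_succ: "(p, Suc a) \<in> (F \<union> F\<inverse>)\<^sup>*"
    using a a_succ unfolding mem_comp_iff by auto
  then have "(Suc a, a) \<in> (F \<union> F\<inverse>)\<^sup>*"
    by (blast intro: rtrancl_trans[OF connected_sym])
  have "\<exists>q. (q, Suc a) \<in> F"
  proof (rule ccontr)
    assume "\<nexists>q. (q, Suc a) \<in> F"
    then have "(Suc a, a) \<in> F\<^sup>*"
      using reachable_from_root[OF unique_parent] \<open>(Suc a, a) \<in> (F \<union> F\<inverse>)\<^sup>*\<close> by blast
    then have "Suc a \<le> a"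
      by (rule rtrancl_increasing_le[OF increasing])
    then show False
      by simp
  qed
  then obtain q where q: "(q, Suc a) \<in> F"
    by blast
  have "(p, q) \<in> (F \<union> F\<inverse>)\<^sup>*"
    using rtrancl_into_rtrancl[OF p_succ, of q] q by blast
  then have "q \<in> comp n F p"
    using q edges unfolding mem_comp_iff by blast
  moreover have "q < Suc a"
    using q increasing by blast
  ultimately have "q = a"
    using least by fastforce
  then show ?thesis
    using q by blast
qed

lemma priority_forest_has_path_edge:
  assumes pf: "priority_forest n F" and "F \<noteq> {}"
  shows "\<exists>i < n. (i, Suc i) \<in> F"
proof -
  have edges: "F \<subseteq> vertices n \<times> vertices n" and increasing: "\<forall>(p, c) \<in> F. p < c"
    using pf unfolding priority_forest_def by simp_all
  obtain p c where pc: "(p, c) \<in> F"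
    using \<open>F \<noteq> {}\<close> by auto
  define C where "C = comp n F p"
  have "p \<in> vertices n"
    using pc edges by auto
  have "p \<in> C" "c \<in> C"
    using pc edges unfolding C_def mem_comp_iff by auto
  have "finite C"
    unfolding C_def comp_def vertices_def by simp
  define a where "a = Min C"
  have "a \<in> C" and least: "\<forall>x \<in> C. a \<le> x"
    using \<open>finite C\<close> \<open>p \<in> C\<close> unfolding a_def by (auto intro: Min_in)
  have "a < c"
    using least \<open>p \<in> C\<close> pc increasing by fastforce
  then have "Suc a \<in> C"
    using priority_forest_comp_convex[OF pf \<open>p \<in> vertices n\<close>, of a c "Suc a"] \<open>a \<in> C\<close> \<open>c \<in> C\<close>
    unfolding C_def by simp
  then have "(a, Suc a) \<in> F"
    using priority_forest_edge_from_least[OF pf] \<open>a \<in> C\<close> least unfolding C_def by blast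
  moreover have "a < n"
    using \<open>a < c\<close> pc edges by (auto simp: vertices_def)
  ultimately show ?thesis
    by blast
qed

definition path_edges :: "nat \<Rightarrow> (nat \<times> nat) set" where
  "path_edges n = {(i, Suc i) | i. i < n}"

lemma connected_if_path_edges:
  assumes "\<forall>i. a \<le> i \<and> i < b \<longrightarrow> (i, Suc i) \<in> G" "a \<le> b"
  shows "(a, b) \<in> (G \<union> G\<inverse>)\<^sup>*"
  using assms
proof (induction b)
  case 0
  then show ?case by simp
next
  case (Suc b)
  show ?case
  proof (cases "a = Suc b")
    case False
    then have "(a, b) \<in> (G \<union> G\<inverse>)\<^sup>*"
      using Suc by simp
    moreover have "(b, Suc b) \<in> G \<union> G\<inverse>"
      using Suc False by simp
    ultimately show ?thesis
      by (rule rtrancl_into_rtrancl)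
  qed simp
qed

lemma missing_path_edge_separates:
  assumes "G \<subseteq> path_edges n" "(a, b) \<in> (G \<union> G\<inverse>)\<^sup>*" "(k, Suc k) \<notin> G"
  shows "a \<le> k \<longleftrightarrow> b \<le> k"
  using assms(2)
proof (induction rule: rtrancl_induct)
  case (step y z)
  then obtain j where "(j, Suc j) \<in> G" "y = j \<and> z = Suc j \<or> z = j \<and> y = Suc j"
    using assms(1) unfolding path_edges_def by blast
  moreover have "j \<noteq> k"
    using \<open>(j, Suc j) \<in> G\<close> assms(3) by blast
  ultimately show ?case
    using step.IH by auto
qed simp

lemma path_subforest_comp_less:
  assumes G: "G \<subseteq> path_edges n" and "x < y" "comp n G x \<noteq> comp n G y"
    and a: "a \<in> comp n G x" and b: "b \<in> comp n G y"
  shows "a < b"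
proof -
  have "(x, y) \<notin> (G \<union> G\<inverse>)\<^sup>*"
    using comp_eq_if_connected \<open>comp n G x \<noteq> comp n G y\<close> by blast
  then obtain k where k: "x \<le> k" "k < y" "(k, Suc k) \<notin> G"
    using connected_if_path_edges[of x y G] \<open>x < y\<close> by auto
  have "a \<le> k"
    using missing_path_edge_separates[OF G _ k(3)] a k(1) by (auto simp: mem_comp_iff)
  moreover have "\<not> b \<le> k"
    using missing_path_edge_separates[OF G _ k(3), of y b] b k(2) by (auto simp: mem_comp_iff)
  ultimately show ?thesis
    by simp
qed

lemma priority_forest_subset_path:
  assumes G: "G \<subseteq> path_edges n"
  shows "priority_forest n G"
proof -
  have "(\<forall>a \<in> comp n G x. \<forall>b \<in> comp n G y. a < b) \<or>
      (\<forall>a \<in> comp n G x. \<forall>b \<in> comp n G y. b < a)"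
    if ne: "comp n G x \<noteq> comp n G y" for x y
  proof -
    from ne consider "x < y" | "y < x"
      by (metis linorder_neqE_nat)
    then show ?thesis
    proof cases
      case 1
      then show ?thesis using path_subforest_comp_less[OF G _ ne] by blast
    next
      case 2
      then show ?thesis using path_subforest_comp_less[OF G _ ne[symmetric]] by blast
    qed
  qed
  moreover have "p = p'" if "(p, c) \<in> G" "(p', c) \<in> G" for p p' c
    using that G unfolding path_edges_def by (blast dest: subsetD)
  moreover have "G \<subseteq> vertices n \<times> vertices n" "\<forall>(p, c) \<in> G. p < c"
    using G unfolding path_edges_def vertices_def by auto
  ultimately show ?thesis
    unfolding priority_forest_def by blast
qed

lemma priority_lattice_finite_poset: "finite_poset (priority_lattice n) priority_le"
proof
  have "priority_lattice n \<subseteq> insert None (Some ` Pow (vertices n \<times> vertices n))"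
    unfolding priority_lattice_def priority_forest_def by auto
  then show "finite (priority_lattice n)"
    by (rule finite_subset) (simp add: vertices_def)
qed (auto simp: priority_le_def split: option.splits)

lemma path_forests_largest_below:
  assumes "n \<ge> 1" "y \<in> priority_lattice n" "y \<notin> Some ` Pow (path_edges n)"
  defines "I \<equiv> Some ` Pow (path_edges n) \<inter> priority_lattice n"
  shows "\<exists>h \<in> I. priority_le (Some {}) h \<and> h \<noteq> Some {} \<and> priority_le h y \<and>
    (\<forall>z \<in> I. priority_le z y \<longrightarrow> priority_le z h)"
proof -
  define E where "E = path_edges n \<inter> (case y of None \<Rightarrow> UNIV | Some F \<Rightarrow> F)"
  have "Some E \<in> I"
    unfolding I_def priority_lattice_def E_def
    by (auto intro: priority_forest_subset_path)
  moreover have "E \<noteq> {}"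
  proof (cases y)
    case None
    then have "(0, 1) \<in> E"
      using \<open>n \<ge> 1\<close> unfolding E_def path_edges_def by auto
    then show ?thesis by blast
  next
    case (Some F)
    then have "priority_forest n F" "F \<noteq> {}"
      using assms(2,3) unfolding priority_lattice_def by auto
    then obtain i where "i < n" "(i, Suc i) \<in> F"
      using priority_forest_has_path_edge by blast
    then show ?thesis
      using Some unfolding E_def path_edges_def by auto
  qed
  moreover have "priority_le (Some E) y" "\<forall>z \<in> I. priority_le z y \<longrightarrow> priority_le z (Some E)"
    unfolding E_def I_def priority_le_def by (auto split: option.splits)
  ultimately show ?thesis
    unfolding priority_le_def by blast
qed

theorem corollary5p12:
  fixes n :: nat
  assumes "n \<ge> 1"
  shows "mobius (priority_lattice n) priority_le (Some {}) None = 0"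
proof -
  interpret finite_poset "priority_lattice n" priority_le
    by (rule priority_lattice_finite_poset)
  have "Some {} \<in> priority_lattice n"
    unfolding priority_lattice_def by (auto intro: priority_forest_subset_path)
  then show ?thesis
    using path_forests_largest_below[OF assms]
    by (intro mobius_eq_0_outside[where I = "Some ` Pow (path_edges n)"])
      (auto simp: priority_lattice_def)
qed

end
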